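(* Let $\mathbb{X}$ be a real reflexive Kadets-Klee Banach space and $\mathbb{Y}$ a real normed linear space, and let $T\in\mathbb{K}(\mathbb{X},\mathbb{Y})$. Then $T$ is a smooth point of $\mathbb{B}(\mathbb{X},\mathbb{Y})$ if and only if $T$ is a smooth point of $\mathbb{K}(\mathbb{X},\mathbb{Y})$.
   Context: $\mathbb{B}(\mathbb{X},\mathbb{Y})$ and its subspace $\mathbb{K}(\mathbb{X},\mathbb{Y})$ of compact operators carry the operator norm. A nonzero element $x$ of a normed space $\mathbb{Z}$ is smooth if there is a unique $f\in\mathbb{Z}^*$ with $\|f\|=1$ and $f(x)=\|x\|$. A normed space $\mathbb{X}$ is Kadets-Klee if whenever $x_n\to x$ weakly and $\|x_n\|\to\|x\|$, then $\|x_n-x\|\to0$. *)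

theory Defs
  imports "HOL-Analysis.Analysis"
begin

definition reflexive_space :: "'a::real_normed_vector itself \<Rightarrow> bool" where
  "reflexive_space _ \<longleftrightarrow>
     (\<forall>\<phi> :: ('a \<Rightarrow>\<^sub>L real) \<Rightarrow>\<^sub>L real. \<exists>x::'a. \<forall>f. blinfun_apply \<phi> f = blinfun_apply f x)"

definition weakly_converges :: "(nat \<Rightarrow> 'a::real_normed_vector) \<Rightarrow> 'a \<Rightarrow> bool" where
  "weakly_converges xs x \<longleftrightarrow>
     (\<forall>f :: 'a \<Rightarrow>\<^sub>L real. (\<lambda>n. blinfun_apply f (xs n)) \<longlonglongrightarrow> blinfun_apply f x)"

definition kadets_klee :: "'a::real_normed_vector itself \<Rightarrow> bool" where
  "kadets_klee _ \<longleftrightarrow>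
     (\<forall>(xs :: nat \<Rightarrow> 'a) x. weakly_converges xs x \<and> (\<lambda>n. norm (xs n)) \<longlonglongrightarrow> norm x
        \<longrightarrow> (\<lambda>n. norm (xs n - x)) \<longlonglongrightarrow> 0)"

definition compact_operators :: "('a::real_normed_vector \<Rightarrow>\<^sub>L 'b::real_normed_vector) set" where
  "compact_operators = {T. compact (closure (blinfun_apply T ` cball 0 1))}"

text \<open>A norm-one continuous linear functional on a linear subspace S of a normed space,
  represented as a function on the whole space that vanishes outside S (so that
  functionals on S correspond one-to-one to such functions).\<close>
definition unit_functional_on :: "'z::real_normed_vector set \<Rightarrow> ('z \<Rightarrow> real) \<Rightarrow> bool" where
  "unit_functional_on S f \<longleftrightarrow>
     (\<forall>x\<in>S. \<forall>y\<in>S. f (x + y) = f x + f y) \<and>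
     (\<forall>c. \<forall>x\<in>S. f (c *\<^sub>R x) = c * f x) \<and>
     (\<forall>x\<in>S. \<bar>f x\<bar> \<le> norm x) \<and>
     (\<forall>e>0. \<exists>x\<in>S. norm x \<le> 1 \<and> \<bar>f x\<bar> > 1 - e) \<and>
     (\<forall>x. x \<notin> S \<longrightarrow> f x = 0)"

definition smooth_point_in :: "'z::real_normed_vector set \<Rightarrow> 'z \<Rightarrow> bool" where
  "smooth_point_in S x \<longleftrightarrow> x \<in> S \<and> x \<noteq> 0 \<and>
     (\<exists>!f. unit_functional_on S f \<and> f x = norm x)"

end

(*
  One direction holds for every subspace in place of the compact operators K: by Hahn-Banach,
  supporting functionals of T on K extend to B(X,Y), and supporting functionals on B(X,Y)
  restrict to K.

  Conversely, let T be smooth in K. Reflexivity and compactness make T attain its norm at a unit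
  vector x0, and testing the supporting functionals A \<mapsto> \<psi> (A x) on rank-one operators shows
  that smoothness in K leaves only the norming points \<pm>x0. With the Kadets-Klee property, every
  norming sequence of T then has a subsequence converging in norm to \<pm>x0. Testing a supporting
  functional F of T on B(X,Y) against almost norming vectors of T + t D, t \<rightarrow> 0, shows F D = 0
  whenever D x0 = 0. Hence F A = F (g0 \<otimes> A x0) with g0 x0 = 1, so F is determined by its values
  on rank-one (compact) operators, where it agrees with the unique supporting functional on K.
*)

theory Submission
  imports Defs
begin

definition linear_on :: "'a::real_vector set \<Rightarrow> ('a \<Rightarrow> real) \<Rightarrow> bool" where
  "linear_on S f \<longleftrightarrow>
     (\<forall>x\<in>S. \<forall>y\<in>S. f (x + y) = f x + f y) \<and> (\<forall>c. \<forall>x\<in>S. f (c *\<^sub>R x) = c * f x)"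

definition sublinear :: "('a::real_vector \<Rightarrow> real) \<Rightarrow> bool" where
  "sublinear p \<longleftrightarrow> (\<forall>x y. p (x + y) \<le> p x + p y) \<and> (\<forall>c\<ge>0. \<forall>x. p (c *\<^sub>R x) = c * p x)"

text \<open>Graphs of linear functionals on subspaces that extend f and are dominated by p;
  as sets of pairs they are ordered by inclusion, which is what Zorn's lemma needs.\<close>
definition dominated_extension ::
    "('a::real_vector \<Rightarrow> real) \<Rightarrow> 'a set \<Rightarrow> ('a \<Rightarrow> real) \<Rightarrow> ('a \<times> real) set \<Rightarrow> bool" where
  "dominated_extension p M f G \<longleftrightarrow>
     (\<forall>x a b. (x, a) \<in> G \<longrightarrow> (x, b) \<in> G \<longrightarrow> a = b) \<and>
     (\<forall>x a y b. (x, a) \<in> G \<longrightarrow> (y, b) \<in> G \<longrightarrow> (x + y, a + b) \<in> G) \<and>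
     (\<forall>x a c. (x, a) \<in> G \<longrightarrow> (c *\<^sub>R x, c * a) \<in> G) \<and>
     (\<forall>x\<in>M. (x, f x) \<in> G) \<and>
     (\<forall>x a. (x, a) \<in> G \<longrightarrow> a \<le> p x)"

lemma dominated_extensionD:
  assumes "dominated_extension p M f G"
  shows dominated_extension_functional: "(x, a) \<in> G \<Longrightarrow> (x, b) \<in> G \<Longrightarrow> a = b"
    and dominated_extension_add: "(x, a) \<in> G \<Longrightarrow> (y, b) \<in> G \<Longrightarrow> (x + y, a + b) \<in> G"
    and dominated_extension_scaleR: "(x, a) \<in> G \<Longrightarrow> (c *\<^sub>R x, c * a) \<in> G"
    and dominated_extension_extends: "x \<in> M \<Longrightarrow> (x, f x) \<in> G"
    and dominated_extension_le: "(x, a) \<in> G \<Longrightarrow> a \<le> p x"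
  using assms unfolding dominated_extension_def by blast+

lemma sublinear_scaleR: "sublinear p \<Longrightarrow> c \<ge> 0 \<Longrightarrow> p (c *\<^sub>R x) = c * p x"
  and sublinear_add_le: "sublinear p \<Longrightarrow> p (x + y) \<le> p x + p y"
  unfolding sublinear_def by blast+

text \<open>The value c at a new point x0 is squeezed between these bounds, which sublinearity of p
  keeps apart.\<close>
lemma dominated_extension_gap:
  assumes G: "dominated_extension p M f G" and p: "sublinear p" and "0 \<in> M"
  obtains c where "\<And>h a. (h, a) \<in> G \<Longrightarrow> a - p (h - x0) \<le> c"
    and "\<And>k b. (k, b) \<in> G \<Longrightarrow> c \<le> p (k + x0) - b"
proof -
  have gap: "a - p (h - x0) \<le> p (k + x0) - b" if "(h, a) \<in> G" "(k, b) \<in> G" for h a k b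
  proof -
    have "a + b \<le> p ((h - x0) + (k + x0))"
      using dominated_extension_le[OF G dominated_extension_add[OF G that]] by simp
    also have "\<dots> \<le> p (h - x0) + p (k + x0)" using sublinear_add_le[OF p] .
    finally show ?thesis by simp
  qed
  define L where "L = {a - p (h - x0) | h a. (h, a) \<in> G}"
  have "(0, f 0) \<in> G" using dominated_extension_extends[OF G \<open>0 \<in> M\<close>] .
  then have "L \<noteq> {}" "bdd_above L" using gap unfolding L_def bdd_above_def by blast+
  then show ?thesis
    by (intro that[of "Sup L"] cSup_upper cSup_least) (auto simp: L_def gap)
qed

lemma dominated_extension_line_le:
  assumes G: "dominated_extension p M f G" and p: "sublinear p"
    and lo: "\<And>h a. (h, a) \<in> G \<Longrightarrow> a - p (h - x0) \<le> c"
    and up: "\<And>k b. (k, b) \<in> G \<Longrightarrow> c \<le> p (k + x0) - b"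
    and h: "(h, a) \<in> G"
  shows "a + t * c \<le> p (h + t *\<^sub>R x0)"
proof (cases t "0::real" rule: linorder_cases)
  case less
  define s where "s = - t"
  have s: "s > 0" using less by (simp add: s_def)
  have "(1/s) * a - p ((1/s) *\<^sub>R h - x0) \<le> c"
    using lo[OF dominated_extension_scaleR[OF G h]] .
  then have "s * ((1/s) * a - p ((1/s) *\<^sub>R h - x0)) \<le> s * c" using s by simp
  moreover have "p (h + t *\<^sub>R x0) = p (s *\<^sub>R ((1/s) *\<^sub>R h - x0))"
    using s by (simp add: s_def algebra_simps)
  moreover have "\<dots> = s * p ((1/s) *\<^sub>R h - x0)" using sublinear_scaleR[OF p] s by simp
  ultimately show ?thesis using s by (simp add: s_def right_diff_distrib)
next
  case equal
  then show ?thesis using dominated_extension_le[OF G h] by simp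
next
  case greater
  have "c \<le> p ((1/t) *\<^sub>R h + x0) - (1/t) * a"
    using up[OF dominated_extension_scaleR[OF G h]] .
  then have "t * c \<le> t * (p ((1/t) *\<^sub>R h + x0) - (1/t) * a)" using greater by simp
  moreover have "p (h + t *\<^sub>R x0) = p (t *\<^sub>R ((1/t) *\<^sub>R h + x0))"
    using greater by (simp add: algebra_simps)
  moreover have "\<dots> = t * p ((1/t) *\<^sub>R h + x0)" using sublinear_scaleR[OF p] greater by simp
  ultimately show ?thesis using greater by (simp add: right_diff_distrib)
qed

lemma dominated_extension_line_unique:
  assumes G: "dominated_extension p M f G" and x0: "\<forall>a. (x0, a) \<notin> G"
    and h: "(h, a) \<in> G" and h': "(h', a') \<in> G" and eq: "h + t *\<^sub>R x0 = h' + t' *\<^sub>R x0"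
  shows "t = t' \<and> h = h'"
proof (cases "t = t'")
  case True
  then show ?thesis using eq by simp
next
  case False
  have "(h + (-1) *\<^sub>R h', a + (-1) * a') \<in> G"
    using dominated_extension_add[OF G h dominated_extension_scaleR[OF G h']] .
  then have "((1 / (t' - t)) *\<^sub>R (h + (-1) *\<^sub>R h'), (1 / (t' - t)) * (a + (-1) * a')) \<in> G"
    by (rule dominated_extension_scaleR[OF G])
  moreover have "h + (-1) *\<^sub>R h' = (t' - t) *\<^sub>R x0" using eq by (simp add: algebra_simps)
  ultimately have "(x0, (1 / (t' - t)) * (a + (-1) * a')) \<in> G" using False by simp
  then show ?thesis using x0 by blast
qed

lemma dominated_extension_extend:
  assumes G: "dominated_extension p M f G" and p: "sublinear p" and "0 \<in> M"
    and x0: "\<forall>a. (x0, a) \<notin> G"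
  shows "\<exists>G'. dominated_extension p M f G' \<and> G \<subset> G'"
proof -
  obtain c where lo: "\<And>h a. (h, a) \<in> G \<Longrightarrow> a - p (h - x0) \<le> c"
    and up: "\<And>k b. (k, b) \<in> G \<Longrightarrow> c \<le> p (k + x0) - b"
    using dominated_extension_gap[OF G p \<open>0 \<in> M\<close>] by blast
  define G' where "G' = {(h + t *\<^sub>R x0, a + t * c) | h a t. (h, a) \<in> G}"
  have mem: "(x, b) \<in> G' \<longleftrightarrow> (\<exists>h a t. (h, a) \<in> G \<and> x = h + t *\<^sub>R x0 \<and> b = a + t * c)" for x b
    unfolding G'_def by blast
  have sub: "G \<subseteq> G'"
  proof (rule subrelI)
    fix x a assume "(x, a) \<in> G"
    then show "(x, a) \<in> G'" unfolding mem by (intro exI[of _ x] exI[of _ a] exI[of _ 0]) simp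
  qed
  have "(0 + 1 *\<^sub>R x0, f 0 + 1 * c) \<in> G'"
    using dominated_extension_extends[OF G \<open>0 \<in> M\<close>] mem by blast
  then have "G \<noteq> G'" using x0 by auto
  have "dominated_extension p M f G'"
    unfolding dominated_extension_def
  proof (intro conjI allI impI ballI)
    fix x a b assume "(x, a) \<in> G'" "(x, b) \<in> G'"
    then obtain h1 a1 t1 h2 a2 t2 where "(h1, a1) \<in> G" "x = h1 + t1 *\<^sub>R x0" "a = a1 + t1 * c"
      and "(h2, a2) \<in> G" "x = h2 + t2 *\<^sub>R x0" "b = a2 + t2 * c"
      unfolding mem by blast
    then show "a = b"
      using dominated_extension_line_unique[OF G x0] dominated_extension_functional[OF G] by metis
  next
    fix x a y b assume "(x, a) \<in> G'" "(y, b) \<in> G'"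
    then obtain h1 a1 t1 h2 a2 t2 where "(h1, a1) \<in> G" "(h2, a2) \<in> G"
      "x + y = (h1 + h2) + (t1 + t2) *\<^sub>R x0" "a + b = (a1 + a2) + (t1 + t2) * c"
      unfolding mem by (auto simp: algebra_simps)
    then show "(x + y, a + b) \<in> G'" using mem dominated_extension_add[OF G] by blast
  next
    fix x a d assume "(x, a) \<in> G'"
    then obtain h1 a1 t1 where "(h1, a1) \<in> G" "x = h1 + t1 *\<^sub>R x0" "a = a1 + t1 * c"
      unfolding mem by blast
    then show "(d *\<^sub>R x, d * a) \<in> G'"
      unfolding mem using dominated_extension_scaleR[OF G]
      by (intro exI[of _ "d *\<^sub>R h1"] exI[of _ "d * a1"] exI[of _ "d * t1"]) (auto simp: algebra_simps)
  next
    fix x assume "x \<in> M"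
    then show "(x, f x) \<in> G'" using sub dominated_extension_extends[OF G] by blast
  next
    fix x a assume "(x, a) \<in> G'"
    then obtain h a1 t where "(h, a1) \<in> G" "x = h + t *\<^sub>R x0" "a = a1 + t * c"
      unfolding mem by blast
    then show "a \<le> p x" using dominated_extension_line_le[OF G p lo up] by blast
  qed
  then show ?thesis using sub \<open>G \<noteq> G'\<close> by blast
qed

lemma dominated_extension_Union:
  assumes C: "C \<in> chains {G. dominated_extension p M f G}" and "C \<noteq> {}"
  shows "dominated_extension p M f (\<Union>C)"
proof -
  have ext: "dominated_extension p M f G" if "G \<in> C" for G
    using C that chainsD2 by blast
  have two: "\<exists>G\<in>C. u \<in> G \<and> v \<in> G" if "u \<in> \<Union>C" "v \<in> \<Union>C" for u v
    using that chainsD[OF C] by blast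
  show ?thesis
    unfolding dominated_extension_def
  proof (intro conjI allI impI ballI)
    fix x a b assume "(x, a) \<in> \<Union>C" "(x, b) \<in> \<Union>C"
    then show "a = b" using two ext dominated_extension_functional by metis
  next
    fix x a y b assume "(x, a) \<in> \<Union>C" "(y, b) \<in> \<Union>C"
    then show "(x + y, a + b) \<in> \<Union>C" using two ext dominated_extension_add by (metis UnionI)
  next
    fix x a c assume "(x, a) \<in> \<Union>C"
    then show "(c *\<^sub>R x, c * a) \<in> \<Union>C" using ext dominated_extension_scaleR by blast
  next
    fix x assume "x \<in> M"
    then show "(x, f x) \<in> \<Union>C" using \<open>C \<noteq> {}\<close> ext dominated_extension_extends by blast
  next
    fix x a assume "(x, a) \<in> \<Union>C"
    then show "a \<le> p x" using ext dominated_extension_le by blast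
  qed
qed

theorem hahn_banach:
  fixes p :: "'a::real_vector \<Rightarrow> real"
  assumes p: "sublinear p" and M: "subspace M" and f: "linear_on M f"
    and le: "\<forall>x\<in>M. f x \<le> p x"
  shows "\<exists>F. linear_on UNIV F \<and> (\<forall>x\<in>M. F x = f x) \<and> (\<forall>x. F x \<le> p x)"
proof -
  define A where "A = {G. dominated_extension p M f G}"
  have "{(x, f x) | x. x \<in> M} \<in> A"
    using f le M unfolding A_def dominated_extension_def linear_on_def subspace_def by auto
  then have "\<exists>U\<in>A. \<forall>X\<in>C. X \<subseteq> U" if "C \<in> chains A" for C
    using that dominated_extension_Union[of C] unfolding A_def by (cases "C = {}") blast+
  then obtain G where G: "dominated_extension p M f G" and max: "\<forall>X\<in>A. G \<subseteq> X \<longrightarrow> X = G"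
    using Zorn_Lemma2[of A] unfolding A_def by blast
  have total: "\<exists>a. (x, a) \<in> G" for x
    using dominated_extension_extend[OF G p subspace_0[OF M], of x] max
    unfolding A_def by blast
  define F where "F x = (THE a. (x, a) \<in> G)" for x
  have FG: "(x, F x) \<in> G" for x
    unfolding F_def using total[of x] dominated_extension_functional[OF G] by (metis theI)
  have F_eq: "F x = a" if "(x, a) \<in> G" for x a
    using dominated_extension_functional[OF G FG that] .
  show ?thesis
  proof (intro exI conjI)
    show "linear_on UNIV F"
      unfolding linear_on_def
      using F_eq dominated_extension_add[OF G FG FG] dominated_extension_scaleR[OF G FG] by simp
    show "\<forall>x\<in>M. F x = f x" using F_eq dominated_extension_extends[OF G] by blast
    show "\<forall>x. F x \<le> p x" using dominated_extension_le[OF G FG] by blast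
  qed
qed

lemma linear_on_minus:
  assumes "linear_on UNIV F"
  shows "F (- x) = - F x"
proof -
  have "F ((-1) *\<^sub>R x) = (-1) * F x" using assms unfolding linear_on_def by blast
  then show ?thesis by simp
qed

lemma linear_on_blinfun_apply: "linear_on S (blinfun_apply g)"
  unfolding linear_on_def by (simp add: blinfun.add_right blinfun.scaleR_right)

lemma linear_on_UNIV_blinfun:
  fixes F :: "'a::real_normed_vector \<Rightarrow> real"
  assumes F: "linear_on UNIV F" and "C \<ge> 0" and le: "\<And>x. \<bar>F x\<bar> \<le> C * norm x"
  obtains G :: "'a \<Rightarrow>\<^sub>L real" where "blinfun_apply G = F" "norm G \<le> C"
proof -
  have "bounded_linear F"
  proof (rule bounded_linear_intro[where K = C])
    show "F (x + y) = F x + F y" "F (r *\<^sub>R x) = r *\<^sub>R F x" for x y r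
      using F unfolding linear_on_def by simp_all
    show "norm (F x) \<le> norm x * C" for x using le[of x] by (simp add: mult.commute)
  qed
  then obtain G :: "'a \<Rightarrow>\<^sub>L real" where G: "blinfun_apply G = F"
    using bounded_linear_Blinfun_apply by blast
  moreover have "norm G \<le> C"
    using le \<open>C \<ge> 0\<close> by (intro norm_blinfun_bound) (simp_all add: G)
  ultimately show ?thesis using that by blast
qed

lemma hahn_banach_norm:
  fixes f :: "'a::real_normed_vector \<Rightarrow> real"
  assumes M: "subspace M" and f: "linear_on M f" and "C \<ge> 0"
    and le: "\<forall>x\<in>M. f x \<le> C * norm x"
  shows "\<exists>F::'a \<Rightarrow>\<^sub>L real. (\<forall>x\<in>M. blinfun_apply F x = f x) \<and> norm F \<le> C"
proof -
  have "sublinear (\<lambda>x::'a. C * norm x)"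
    unfolding sublinear_def
  proof (intro conjI allI impI)
    show "C * norm (x + y) \<le> C * norm x + C * norm y" for x y :: 'a
      using mult_left_mono[OF norm_triangle_ineq \<open>C \<ge> 0\<close>] by (simp add: distrib_left)
    show "C * norm (c *\<^sub>R x) = c * (C * norm x)" if "c \<ge> 0" for c and x :: 'a
      using that by simp
  qed
  then obtain F where F: "linear_on UNIV F" "\<forall>x\<in>M. F x = f x" "\<forall>x. F x \<le> C * norm x"
    using hahn_banach[OF _ M f le] by blast
  have abs_le: "\<bar>F x\<bar> \<le> C * norm x" for x
    using F(3)[rule_format, of x] F(3)[rule_format, of "- x"] linear_on_minus[OF F(1), of x] by simp
  obtain G where "blinfun_apply G = F" "norm G \<le> C"
    by (rule linear_on_UNIV_blinfun[OF F(1) \<open>C \<ge> 0\<close> abs_le])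
  then show ?thesis using F(2) by (intro exI[of _ G]) simp
qed

lemma exists_norming_functional:
  fixes y :: "'a::real_normed_vector"
  assumes "y \<noteq> 0"
  shows "\<exists>g::'a \<Rightarrow>\<^sub>L real. norm g \<le> 1 \<and> blinfun_apply g y = norm y"
proof -
  define f where "f z = (THE a. z = a *\<^sub>R y) * norm y" for z
  have f_scaleR: "f (a *\<^sub>R y) = a * norm y" for a
    using assms unfolding f_def by (subst the_equality) auto
  have span: "span {y} = range (\<lambda>a. a *\<^sub>R y)" by (rule span_singleton)
  have "linear_on (span {y}) f"
    unfolding linear_on_def span
  proof (intro conjI ballI allI)
    fix u v assume "u \<in> range (\<lambda>a. a *\<^sub>R y)" "v \<in> range (\<lambda>a. a *\<^sub>R y)"
    then obtain a b where "u = a *\<^sub>R y" "v = b *\<^sub>R y" by blast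
    moreover have "a *\<^sub>R y + b *\<^sub>R y = (a + b) *\<^sub>R y" by (rule scaleR_add_left[symmetric])
    ultimately show "f (u + v) = f u + f v" by (simp only: f_scaleR distrib_right)
  next
    fix c u assume "u \<in> range (\<lambda>a. a *\<^sub>R y)"
    then obtain a where "u = a *\<^sub>R y" by blast
    then show "f (c *\<^sub>R u) = c * f u" by (simp add: f_scaleR)
  qed
  moreover have "\<forall>x\<in>span {y}. f x \<le> 1 * norm x"
    unfolding span by (auto simp: f_scaleR intro!: mult_right_mono)
  ultimately obtain g :: "'a \<Rightarrow>\<^sub>L real" where "\<forall>x\<in>span {y}. blinfun_apply g x = f x" "norm g \<le> 1"
    using hahn_banach_norm[OF subspace_span, of "{y}" f 1] by auto
  moreover have "f y = norm y" using f_scaleR[of 1] by simp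
  ultimately show ?thesis using span_base[of y "{y}"] by auto
qed

lemma abs_blinfun_apply_le:
  fixes g :: "'a::real_normed_vector \<Rightarrow>\<^sub>L real"
  assumes "norm g \<le> 1"
  shows "\<bar>blinfun_apply g x\<bar> \<le> norm x"
proof -
  have "\<bar>blinfun_apply g x\<bar> \<le> norm g * norm x" using norm_blinfun[of g x] by simp
  also have "\<dots> \<le> norm x" using mult_right_mono[OF assms norm_ge_zero] by simp
  finally show ?thesis .
qed

lemma blinfun_separates_points:
  fixes x y :: "'a::real_normed_vector"
  assumes "\<And>g::'a \<Rightarrow>\<^sub>L real. blinfun_apply g x = blinfun_apply g y"
  shows "x = y"
proof (rule ccontr)
  assume "x \<noteq> y"
  then obtain g :: "'a \<Rightarrow>\<^sub>L real" where "blinfun_apply g (x - y) = norm (x - y)"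
    using exists_norming_functional[of "x - y"] by auto
  then show False using assms[of g] \<open>x \<noteq> y\<close> by (simp add: blinfun.diff_right)
qed

lemma unit_functional_onI:
  fixes f :: "'a::real_normed_vector \<Rightarrow> real"
  assumes S: "subspace S" and lin: "linear_on S f" and le: "\<And>x. x \<in> S \<Longrightarrow> \<bar>f x\<bar> \<le> norm x"
    and outside: "\<And>x. x \<notin> S \<Longrightarrow> f x = 0"
    and z: "z \<in> S" "z \<noteq> 0" "f z = norm z"
  shows "unit_functional_on S f"
  unfolding unit_functional_on_def
proof (intro conjI allI impI ballI)
  show "f (x + y) = f x + f y" if "x \<in> S" "y \<in> S" for x y
    using lin that unfolding linear_on_def by blast
  show "f (c *\<^sub>R x) = c * f x" if "x \<in> S" for x c
    using lin that unfolding linear_on_def by blast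
  show "\<bar>f x\<bar> \<le> norm x" if "x \<in> S" for x using le that .
  show "f x = 0" if "x \<notin> S" for x using outside that .
  fix e :: real assume "e > 0"
  have "(1 / norm z) *\<^sub>R z \<in> S" using S z(1) by (rule subspace_scale)
  moreover have "f ((1 / norm z) *\<^sub>R z) = 1"
    using lin z calculation unfolding linear_on_def by simp
  ultimately show "\<exists>x\<in>S. norm x \<le> 1 \<and> 1 - e < \<bar>f x\<bar>"
    using \<open>e > 0\<close> z(2) by (intro bexI[of _ "(1 / norm z) *\<^sub>R z"]) auto
qed

lemma unit_functional_on_linear_on: "unit_functional_on S f \<Longrightarrow> linear_on S f"
  and unit_functional_on_abs_le: "unit_functional_on S f \<Longrightarrow> x \<in> S \<Longrightarrow> \<bar>f x\<bar> \<le> norm x"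
  and unit_functional_on_outside: "unit_functional_on S f \<Longrightarrow> x \<notin> S \<Longrightarrow> f x = 0"
  unfolding unit_functional_on_def linear_on_def by blast+

lemma unit_functional_on_blinfun:
  fixes g :: "'a::real_normed_vector \<Rightarrow>\<^sub>L real"
  assumes "norm g \<le> 1" "z \<noteq> 0" "blinfun_apply g z = norm z"
  shows "unit_functional_on UNIV (blinfun_apply g)"
  using assms by (intro unit_functional_onI linear_on_blinfun_apply abs_blinfun_apply_le) auto

lemma unit_functional_on_restrict:
  assumes F: "unit_functional_on UNIV F" "F z = norm z"
    and S: "subspace S" "z \<in> S" "z \<noteq> 0"
  shows "unit_functional_on S (\<lambda>x. if x \<in> S then F x else 0)"
proof (rule unit_functional_onI[OF S(1) _ _ _ S(2,3)])
  show "linear_on S (\<lambda>x. if x \<in> S then F x else 0)"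
    using unit_functional_on_linear_on[OF F(1)] subspace_add[OF S(1)] subspace_scale[OF S(1)]
    unfolding linear_on_def by simp
qed (use unit_functional_on_abs_le[OF F(1)] F(2) S(2) in auto)

lemma unit_functional_on_extend:
  assumes f: "unit_functional_on S f" "f z = norm z"
    and S: "subspace S" "z \<in> S" "z \<noteq> 0"
  shows "\<exists>F. unit_functional_on UNIV F \<and> F z = norm z \<and> (\<forall>x\<in>S. F x = f x)"
proof -
  have "\<forall>x\<in>S. f x \<le> 1 * norm x"
    using unit_functional_on_abs_le[OF f(1)] by (auto intro: order_trans[OF abs_ge_self])
  then obtain g :: "'a \<Rightarrow>\<^sub>L real" where g: "\<forall>x\<in>S. blinfun_apply g x = f x" "norm g \<le> 1"
    using hahn_banach_norm[OF S(1) unit_functional_on_linear_on[OF f(1)], of 1] by auto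
  then have "blinfun_apply g z = norm z" using f(2) S(2) by simp
  then show ?thesis using unit_functional_on_blinfun[OF g(2) S(3)] g(1) by blast
qed

lemma smooth_point_in_UNIV_imp_subspace:
  assumes S: "subspace S" "z \<in> S" and smooth: "smooth_point_in UNIV z"
  shows "smooth_point_in S z"
proof -
  have "z \<noteq> 0" using smooth unfolding smooth_point_in_def by blast
  obtain F where F: "unit_functional_on UNIV F" "F z = norm z"
    and F_unique: "\<And>G. unit_functional_on UNIV G \<Longrightarrow> G z = norm z \<Longrightarrow> G = F"
    using smooth unfolding smooth_point_in_def by blast
  define f where "f x = (if x \<in> S then F x else 0)" for x
  have f: "unit_functional_on S f" "f z = norm z"
    using unit_functional_on_restrict[OF F S \<open>z \<noteq> 0\<close>] F(2) S(2) by (simp_all add: f_def[abs_def])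
  have "g = f" if g: "unit_functional_on S g" "g z = norm z" for g
  proof
    fix x
    obtain G where G: "unit_functional_on UNIV G" "G z = norm z" "\<forall>x\<in>S. G x = g x"
      using unit_functional_on_extend[OF g S \<open>z \<noteq> 0\<close>] by blast
    show "g x = f x"
      using G(3) F_unique[OF G(1,2)] unit_functional_on_outside[OF g(1)] by (cases "x \<in> S") (simp_all add: f_def)
  qed
  then show ?thesis using f S(2) \<open>z \<noteq> 0\<close> unfolding smooth_point_in_def by blast
qed

lemma compact_closure_of_subset:
  fixes X :: "'a::metric_space set"
  assumes "compact K" "X \<subseteq> K"
  shows "compact (closure X)"
proof -
  have "closure X \<subseteq> K" using assms by (simp add: closure_minimal compact_imp_closed)
  then show ?thesis using compact_Int_closed[OF assms(1) closed_closure[of X]] by (simp add: Int_absorb1)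
qed

lemma compact_operatorsI:
  assumes "compact K" "blinfun_apply T ` cball 0 1 \<subseteq> K"
  shows "T \<in> compact_operators"
  using compact_closure_of_subset[OF assms] unfolding compact_operators_def by simp

lemma compact_operators_subspace:
  "subspace (compact_operators :: ('a::real_normed_vector \<Rightarrow>\<^sub>L 'b::real_normed_vector) set)"
  unfolding subspace_def
proof (intro conjI ballI allI)
  show "0 \<in> (compact_operators :: ('a \<Rightarrow>\<^sub>L 'b) set)"
    by (rule compact_operatorsI[OF compact_sing[of 0]]) auto
next
  fix A B :: "'a \<Rightarrow>\<^sub>L 'b" assume "A \<in> compact_operators" "B \<in> compact_operators"
  then have "compact {u + v | u v. u \<in> closure (blinfun_apply A ` cball 0 1) \<and>
      v \<in> closure (blinfun_apply B ` cball 0 1)}"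
    unfolding compact_operators_def by (intro compact_sums) auto
  then show "A + B \<in> compact_operators"
    by (rule compact_operatorsI) (force simp: blinfun.add_left intro: closure_subset[THEN subsetD])
next
  fix c :: real and A :: "'a \<Rightarrow>\<^sub>L 'b" assume "A \<in> compact_operators"
  then have "compact ((\<lambda>v. c *\<^sub>R v) ` closure (blinfun_apply A ` cball 0 1))"
    unfolding compact_operators_def by (intro compact_scaling) auto
  then show "c *\<^sub>R A \<in> compact_operators"
    by (rule compact_operatorsI) (force simp: blinfun.scaleR_left intro: closure_subset[THEN subsetD])
qed

lemma norm_blinfun_apply_le_norm: "norm x \<le> 1 \<Longrightarrow> norm (blinfun_apply T x) \<le> norm T"
  using norm_blinfun[of T x] mult_left_le[of "norm x" "norm T"] by simp

lemma rank_one_compact_operator: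
  "blinfun_scaleR_left v o\<^sub>L g \<in> compact_operators"
proof (rule compact_operatorsI)
  show "compact ((\<lambda>r. r *\<^sub>R v) ` cball 0 (norm g))"
    by (intro compact_continuous_image continuous_intros) auto
  show "blinfun_apply (blinfun_scaleR_left v o\<^sub>L g) ` cball 0 1 \<subseteq> (\<lambda>r. r *\<^sub>R v) ` cball 0 (norm g)"
    using norm_blinfun_apply_le_norm[of _ g] by auto
qed

lemma exists_almost_norming_vector:
  fixes T :: "'a::real_normed_vector \<Rightarrow>\<^sub>L 'b::real_normed_vector"
  assumes "e > 0"
  shows "\<exists>x. norm x \<le> 1 \<and> norm T - e < norm (blinfun_apply T x)"
proof (rule ccontr)
  assume "\<not> ?thesis"
  then have le: "norm (blinfun_apply T x) \<le> norm T - e" if "norm x \<le> 1" for x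
    using that by force
  have "norm (blinfun_apply T x) \<le> (norm T - e) * norm x" for x
  proof (cases "x = 0")
    case False
    have "norm (blinfun_apply T ((1 / norm x) *\<^sub>R x)) \<le> norm T - e" by (rule le) (use False in simp)
    then show ?thesis using False by (simp add: blinfun.scaleR_right divide_le_eq)
  qed simp
  then have "norm T \<le> norm T - e" using le[of 0] by (intro norm_blinfun_bound) simp_all
  then show False using \<open>e > 0\<close> by simp
qed

lemma exists_norming_sequence:
  fixes T :: "'a::real_normed_vector \<Rightarrow>\<^sub>L 'b::real_normed_vector"
  obtains z where "\<forall>n. norm (z n) \<le> 1" "(\<lambda>n. norm (blinfun_apply T (z n))) \<longlonglongrightarrow> norm T"
proof -
  obtain z where z: "\<And>n. norm (z n) \<le> 1"
    "\<And>n. norm T - inverse (real (Suc n)) < norm (blinfun_apply T (z n))"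
    using exists_almost_norming_vector[of "inverse (real (Suc _))" T]
    by (metis inverse_positive_iff_positive of_nat_0_less_iff zero_less_Suc)
  have lo: "(\<lambda>n. norm T - inverse (real (Suc n))) \<longlonglongrightarrow> norm T"
    using LIMSEQ_inverse_real_of_nat_add_minus[of "norm T"] by simp
  have "(\<lambda>n. norm (blinfun_apply T (z n))) \<longlonglongrightarrow> norm T"
    using z norm_blinfun_apply_le_norm
    by (intro tendsto_sandwich[OF _ _ lo tendsto_const] always_eventually allI) (auto intro: less_imp_le)
  then show ?thesis using that z(1) by blast
qed

lemma compact_operator_convergent_subseq:
  fixes z :: "nat \<Rightarrow> 'a::real_normed_vector"
  assumes "T \<in> compact_operators" "\<forall>n. norm (z n) \<le> 1"
  obtains r y where "strict_mono r" "(\<lambda>n. blinfun_apply T (z (r n))) \<longlonglongrightarrow> y"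
proof -
  have "seq_compact (closure (blinfun_apply T ` cball 0 1))"
    using assms(1) compact_imp_seq_compact unfolding compact_operators_def by blast
  moreover have "\<forall>n. (blinfun_apply T \<circ> z) n \<in> closure (blinfun_apply T ` cball 0 1)"
    using assms(2) closure_subset by fastforce
  ultimately obtain y r where "y \<in> closure (blinfun_apply T ` cball 0 1)"
      "strict_mono r" "(blinfun_apply T \<circ> z \<circ> r) \<longlonglongrightarrow> y"
    by (rule seq_compactE)
  then show ?thesis using that by (simp add: o_def)
qed

lemma norm_eq_1_if_norming:
  fixes T :: "'a::real_normed_vector \<Rightarrow>\<^sub>L 'b::real_normed_vector"
  assumes "T \<noteq> 0" "norm x \<le> 1" "norm (blinfun_apply T x) = norm T"
  shows "norm x = 1"
proof -
  have "norm T \<le> norm T * norm x" using norm_blinfun[of T x] assms(3) by simp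
  then show ?thesis using assms(1,2) by (simp add: mult_le_cancel_left1)
qed

text \<open>Applied to -g, the inequality also bounds g x below by the liminf, so this is a weak
  cluster point condition that avoids weak topologies.\<close>
definition weak_limsup_point :: "(nat \<Rightarrow> 'a::real_normed_vector) \<Rightarrow> 'a \<Rightarrow> bool" where
  "weak_limsup_point z x \<longleftrightarrow>
     (\<forall>g::'a \<Rightarrow>\<^sub>L real. ereal (blinfun_apply g x) \<le> limsup (\<lambda>n. ereal (blinfun_apply g (z n))))"

lemma weak_limsup_point_lower_bound:
  fixes g :: "'a::real_normed_vector \<Rightarrow>\<^sub>L real"
  assumes "weak_limsup_point z x" "\<And>n. a \<le> blinfun_apply g (z n)"
  shows "a \<le> blinfun_apply g x"
proof -
  have "ereal (blinfun_apply (- g) x) \<le> limsup (\<lambda>n. ereal (blinfun_apply (- g) (z n)))"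
    using assms(1) unfolding weak_limsup_point_def by blast
  also have "\<dots> \<le> ereal (- a)"
    using assms(2) by (intro Limsup_bounded always_eventually) (simp add: blinfun.minus_left)
  finally show ?thesis by (simp add: blinfun.minus_left)
qed

lemma weak_limsup_point_tendsto:
  fixes g :: "'a::real_normed_vector \<Rightarrow>\<^sub>L real"
  assumes "weak_limsup_point z x" "(\<lambda>n. blinfun_apply g (z n)) \<longlonglongrightarrow> l"
  shows "blinfun_apply g x = l"
proof -
  have limsup: "limsup (\<lambda>n. ereal (blinfun_apply h (z n))) = ereal m"
    if "(\<lambda>n. blinfun_apply h (z n)) \<longlonglongrightarrow> m" for h :: "'a \<Rightarrow>\<^sub>L real" and m
    using that by (intro lim_imp_Limsup) (auto intro: tendsto_ereal)
  have "(\<lambda>n. blinfun_apply (- g) (z n)) \<longlonglongrightarrow> - l"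
    using tendsto_minus[OF assms(2)] by (simp add: blinfun.minus_left)
  then have "ereal (blinfun_apply g x) \<le> ereal l" "ereal (blinfun_apply (- g) x) \<le> ereal (- l)"
    using assms limsup unfolding weak_limsup_point_def by metis+
  then show ?thesis by (simp add: blinfun.minus_left)
qed

lemma weak_limsup_point_image:
  fixes T :: "'a::real_normed_vector \<Rightarrow>\<^sub>L 'b::real_normed_vector"
  assumes "weak_limsup_point z x" "(\<lambda>n. blinfun_apply T (z n)) \<longlonglongrightarrow> y"
  shows "blinfun_apply T x = y"
proof (rule blinfun_separates_points)
  fix h :: "'b \<Rightarrow>\<^sub>L real"
  have "(\<lambda>n. blinfun_apply (h o\<^sub>L T) (z n)) \<longlonglongrightarrow> blinfun_apply h y"
    using blinfun.tendsto[OF tendsto_const assms(2), of h] by simp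
  from weak_limsup_point_tendsto[OF assms(1) this]
  show "blinfun_apply h (blinfun_apply T x) = blinfun_apply h y" by simp
qed

lemma sublinear_limsup:
  fixes z :: "nat \<Rightarrow> 'a::real_normed_vector"
  assumes z: "\<forall>n. norm (z n) \<le> 1"
  defines "p \<equiv> \<lambda>g::'a \<Rightarrow>\<^sub>L real. real_of_ereal (limsup (\<lambda>n. ereal (blinfun_apply g (z n))))"
  shows "\<And>g. ereal (p g) = limsup (\<lambda>n. ereal (blinfun_apply g (z n)))"
    and "\<And>g. p g \<le> norm g"
    and "sublinear p"
proof -
  have bounded: "\<bar>blinfun_apply g (z n)\<bar> \<le> norm g" for g :: "'a \<Rightarrow>\<^sub>L real" and n
    using norm_blinfun_apply_le_norm[of "z n" g] z by simp
  have upper: "limsup (\<lambda>n. ereal (blinfun_apply g (z n))) \<le> ereal (norm g)" for g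
    using bounded by (intro Limsup_bounded always_eventually) (simp add: abs_le_iff)
  have "- ereal (norm g) \<le> liminf (\<lambda>n. ereal (blinfun_apply g (z n)))" for g
    using bounded by (intro Liminf_bounded always_eventually) (simp add: abs_le_iff minus_le_iff)
  then have lower: "- ereal (norm g) \<le> limsup (\<lambda>n. ereal (blinfun_apply g (z n)))" for g
    using Liminf_le_Limsup order_trans trivial_limit_sequentially by blast
  show p: "ereal (p g) = limsup (\<lambda>n. ereal (blinfun_apply g (z n)))" for g
  proof -
    have "\<bar>limsup (\<lambda>n. ereal (blinfun_apply g (z n)))\<bar> \<noteq> \<infinity>"
      using upper[of g] lower[of g] by auto
    then show ?thesis unfolding p_def by (simp add: ereal_real)
  qed
  show "p g \<le> norm g" for g using upper[of g] unfolding p[symmetric] by simp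
  show "sublinear p"
    unfolding sublinear_def
  proof (intro conjI allI impI)
    show "p (g + h) \<le> p g + p h" for g h
    proof -
      have "ereal (p (g + h)) =
          limsup (\<lambda>n. ereal (blinfun_apply g (z n)) + ereal (blinfun_apply h (z n)))"
        unfolding p by (simp add: blinfun.add_left)
      also have "\<dots> \<le> ereal (p g) + ereal (p h)"
        unfolding p by (rule ereal_limsup_add_mono)
      finally show ?thesis by simp
    qed
    show "p (c *\<^sub>R g) = c * p g" if "c \<ge> 0" for c g
    proof -
      have "ereal (p (c *\<^sub>R g)) = limsup (\<lambda>n. ereal c * ereal (blinfun_apply g (z n)))"
        unfolding p by (simp add: blinfun.scaleR_left)
      also have "\<dots> = ereal c * ereal (p g)"
        unfolding p by (rule limsup_ereal_mult_left[OF that])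
      finally show ?thesis by simp
    qed
  qed
qed

text \<open>A Hahn-Banach functional below g \<mapsto> limsup g (z n) lies in the bidual, and reflexivity
  turns it into a point of the space; this replaces weak sequential compactness of the ball.\<close>
lemma reflexive_exists_weak_limsup_point:
  fixes z :: "nat \<Rightarrow> 'a::real_normed_vector"
  assumes reflexive: "reflexive_space TYPE('a)" and z: "\<forall>n. norm (z n) \<le> 1"
  obtains x where "norm x \<le> 1" "weak_limsup_point z x"
proof -
  define p where "p g = real_of_ereal (limsup (\<lambda>n. ereal (blinfun_apply g (z n))))" for g
  note p = sublinear_limsup[OF z, folded p_def]
  have "linear_on {0} (\<lambda>_. 0)" "\<forall>g\<in>{0}. 0 \<le> p g"
    using sublinear_scaleR[OF p(3), of 0 0] unfolding linear_on_def by simp_all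
  then obtain \<phi> where \<phi>: "linear_on UNIV \<phi>" "\<forall>g. \<phi> g \<le> p g"
    using hahn_banach[OF p(3) subspace_single_0] by blast
  have "\<bar>\<phi> g\<bar> \<le> 1 * norm g" for g
    using \<phi>(2) p(2)[of g] p(2)[of "- g"] linear_on_minus[OF \<phi>(1), of g] by (smt (verit) norm_minus_cancel)
  then obtain \<Phi> where \<Phi>: "blinfun_apply \<Phi> = \<phi>" "norm \<Phi> \<le> 1"
    using linear_on_UNIV_blinfun[OF \<phi>(1)] by (metis zero_le_one)
  then obtain x where x: "\<And>g. \<phi> g = blinfun_apply g x"
    using reflexive unfolding reflexive_space_def by metis
  have "weak_limsup_point z x"
    unfolding weak_limsup_point_def using \<phi>(2) x p(1) by (metis ereal_less_eq(3))
  moreover have "norm x \<le> 1"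
  proof (cases "x = 0")
    case False
    then obtain g :: "'a \<Rightarrow>\<^sub>L real" where "norm g \<le> 1" "blinfun_apply g x = norm x"
      using exists_norming_functional by blast
    then show ?thesis using \<phi>(2)[rule_format, of g] p(2)[of g] x[of g] by linarith
  qed simp
  ultimately show ?thesis using that by blast
qed

lemma compact_operator_attains_norm:
  fixes T :: "'a::real_normed_vector \<Rightarrow>\<^sub>L 'b::real_normed_vector"
  assumes reflexive: "reflexive_space TYPE('a)" and T: "T \<in> compact_operators"
  obtains x where "norm x \<le> 1" "norm (blinfun_apply T x) = norm T"
proof -
  obtain z where z: "\<forall>n. norm (z n) \<le> 1" "(\<lambda>n. norm (blinfun_apply T (z n))) \<longlonglongrightarrow> norm T"
    by (rule exists_norming_sequence)
  obtain r y where r: "strict_mono r" "(\<lambda>n. blinfun_apply T (z (r n))) \<longlonglongrightarrow> y"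
    using compact_operator_convergent_subseq[OF T z(1)] by blast
  obtain x where x: "norm x \<le> 1" "weak_limsup_point (\<lambda>n. z (r n)) x"
    using reflexive_exists_weak_limsup_point[OF reflexive, of "\<lambda>n. z (r n)"] z(1) by blast
  have "(\<lambda>n. norm (blinfun_apply T (z (r n)))) \<longlonglongrightarrow> norm T"
    using LIMSEQ_subseq_LIMSEQ[OF z(2) r(1)] by (simp add: o_def)
  then have "norm y = norm T" using tendsto_norm[OF r(2)] LIMSEQ_unique by blast
  then show ?thesis using that x(1) weak_limsup_point_image[OF x(2) r(2)] by simp
qed

lemma evaluation_unit_functional:
  fixes T :: "'a::real_normed_vector \<Rightarrow>\<^sub>L 'b::real_normed_vector" and \<psi> :: "'b \<Rightarrow>\<^sub>L real"
  assumes S: "subspace S" "T \<in> S" "T \<noteq> 0" and "norm \<psi> \<le> 1" "norm x \<le> 1"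
    and norming: "blinfun_apply \<psi> (blinfun_apply T x) = norm T"
  shows "unit_functional_on S (\<lambda>A. if A \<in> S then blinfun_apply \<psi> (blinfun_apply A x) else 0)"
proof (rule unit_functional_on_restrict[OF _ _ S])
  have "\<bar>blinfun_apply \<psi> (blinfun_apply A x)\<bar> \<le> norm A" for A :: "'a \<Rightarrow>\<^sub>L 'b"
    using abs_blinfun_apply_le[OF \<open>norm \<psi> \<le> 1\<close>] norm_blinfun_apply_le_norm[OF \<open>norm x \<le> 1\<close>]
    by (rule order_trans)
  then show "unit_functional_on UNIV (\<lambda>A. blinfun_apply \<psi> (blinfun_apply A x))"
    using S(3) norming
    by (intro unit_functional_onI[of UNIV _ T])
      (auto simp: linear_on_def blinfun.add_left blinfun.scaleR_left blinfun.add_right blinfun.scaleR_right)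
qed (use norming in simp)

lemma smooth_compact_operator_norming_points:
  fixes T :: "'a::real_normed_vector \<Rightarrow>\<^sub>L 'b::real_normed_vector"
  assumes smooth: "smooth_point_in compact_operators T"
    and x0: "norm x0 \<le> 1" "norm (blinfun_apply T x0) = norm T"
    and x1: "norm x1 \<le> 1" "norm (blinfun_apply T x1) = norm T"
  shows "x1 = x0 \<or> x1 = - x0"
proof -
  have T: "T \<in> compact_operators" "T \<noteq> 0"
    and unique: "\<exists>!f. unit_functional_on compact_operators f \<and> f T = norm T"
    using smooth unfolding smooth_point_in_def by auto
  define \<Phi> where "\<Phi> \<psi> x A = (if A \<in> compact_operators then blinfun_apply \<psi> (blinfun_apply A x) else 0)"
    for \<psi> :: "'b \<Rightarrow>\<^sub>L real" and x :: 'a and A :: "'a \<Rightarrow>\<^sub>L 'b"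
  have supporting: "\<exists>\<psi>. norm \<psi> \<le> 1 \<and> blinfun_apply \<psi> (blinfun_apply T x) = norm T \<and>
      unit_functional_on compact_operators (\<Phi> \<psi> x) \<and> \<Phi> \<psi> x T = norm T"
    if x: "norm x \<le> 1" "norm (blinfun_apply T x) = norm T" for x
  proof -
    have "blinfun_apply T x \<noteq> 0" using x(2) T(2) norm_eq_zero by metis
    then obtain \<psi> where "norm \<psi> \<le> 1" "blinfun_apply \<psi> (blinfun_apply T x) = norm T"
      using exists_norming_functional[of "blinfun_apply T x"] x(2) by auto
    then show ?thesis
      using evaluation_unit_functional[OF compact_operators_subspace T] x(1) T(1)
      unfolding \<Phi>_def[abs_def] by auto
  qed
  \<comment> \<open>both supporting functionals are the unique one; on rank-one operators this makes x0 and
    x1 proportional\<close>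
  obtain \<psi>0 \<psi>1 where \<psi>0: "blinfun_apply \<psi>0 (blinfun_apply T x0) = norm T"
    and "\<Phi> \<psi>0 x0 = \<Phi> \<psi>1 x1"
    using supporting[OF x0] supporting[OF x1] unique by metis
  have rank_one: "\<Phi> \<psi> x (blinfun_scaleR_left v o\<^sub>L g) = blinfun_apply g x * blinfun_apply \<psi> v"
    for \<psi> x v g
    unfolding \<Phi>_def using rank_one_compact_operator[of v g] by (simp add: blinfun.scaleR_right)
  have eq: "blinfun_apply g x0 * norm T = blinfun_apply g x1 * blinfun_apply \<psi>1 (blinfun_apply T x0)"
    for g :: "'a \<Rightarrow>\<^sub>L real"
    using rank_one[of \<psi>0 x0 "blinfun_apply T x0" g] rank_one[of \<psi>1 x1 "blinfun_apply T x0" g]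
      \<open>\<Phi> \<psi>0 x0 = \<Phi> \<psi>1 x1\<close> \<psi>0 by simp
  define c where "c = blinfun_apply \<psi>1 (blinfun_apply T x0) / norm T"
  have "blinfun_apply g x0 = blinfun_apply g (c *\<^sub>R x1)" for g :: "'a \<Rightarrow>\<^sub>L real"
    using eq[of g] T(2) unfolding c_def by (simp add: blinfun.scaleR_right field_simps)
  then have x0_eq: "x0 = c *\<^sub>R x1" by (rule blinfun_separates_points)
  moreover have "norm x0 = 1" "norm x1 = 1"
    using norm_eq_1_if_norming[OF T(2)] x0 x1 by auto
  ultimately have "\<bar>c\<bar> = 1" by simp
  then have "c = 1 \<or> c = -1" by linarith
  then show ?thesis using x0_eq by auto
qed

lemma frequently_sequentially_subseq:
  assumes "frequently P sequentially"
  obtains q :: "nat \<Rightarrow> nat" where "strict_mono q" "\<And>n. P (q n)"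
proof -
  have "infinite {n. P n}"
    using assms by (simp add: INFM_iff_infinite cofinite_eq_sequentially[symmetric])
  then show ?thesis using infinite_enumerate that by blast
qed

lemma tendsto_of_subseq_bounds:
  fixes s :: "nat \<Rightarrow> real"
  assumes lower: "\<And>(q :: nat \<Rightarrow> nat) a. strict_mono q \<Longrightarrow> (\<And>n. a \<le> s (q n)) \<Longrightarrow> a \<le> c"
    and upper: "\<And>(q :: nat \<Rightarrow> nat) a. strict_mono q \<Longrightarrow> (\<And>n. s (q n) \<le> a) \<Longrightarrow> c \<le> a"
  shows "s \<longlonglongrightarrow> c"
proof (rule order_tendstoI)
  fix a assume "a < c"
  show "\<forall>\<^sub>F n in sequentially. a < s n"
  proof (rule ccontr)
    assume "\<not> ?thesis"
    then obtain q :: "nat \<Rightarrow> nat" where "strict_mono q" "\<And>n. s (q n) \<le> a"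
      by (auto simp: not_eventually not_less elim: frequently_sequentially_subseq)
    then have "c \<le> a" by (rule upper)
    with \<open>a < c\<close> show False by simp
  qed
next
  fix a assume "c < a"
  show "\<forall>\<^sub>F n in sequentially. s n < a"
  proof (rule ccontr)
    assume "\<not> ?thesis"
    then obtain q :: "nat \<Rightarrow> nat" where "strict_mono q" "\<And>n. a \<le> s (q n)"
      by (auto simp: not_eventually not_less elim: frequently_sequentially_subseq)
    then have "a \<le> c" by (rule lower)
    with \<open>c < a\<close> show False by simp
  qed
qed

lemma weakly_converges_if_unique_weak_limsup_point:
  fixes w :: "nat \<Rightarrow> 'a::real_normed_vector"
  assumes reflexive: "reflexive_space TYPE('a)" and w: "\<forall>n. norm (w n) \<le> 1"
    and unique: "\<And>q x'. strict_mono q \<Longrightarrow> norm x' \<le> 1 \<Longrightarrow>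
      weak_limsup_point (\<lambda>n. w (q n)) x' \<Longrightarrow> x' = x"
  shows "weakly_converges w x"
  unfolding weakly_converges_def
proof
  fix g :: "'a \<Rightarrow>\<^sub>L real"
  have limsup_point: "weak_limsup_point (\<lambda>n. w (q n)) x" if "strict_mono q" for q
  proof -
    obtain x' where "norm x' \<le> 1" "weak_limsup_point (\<lambda>n. w (q n)) x'"
      using reflexive_exists_weak_limsup_point[OF reflexive, of "\<lambda>n. w (q n)"] w by blast
    then show ?thesis using unique[OF that] by blast
  qed
  show "(\<lambda>n. blinfun_apply g (w n)) \<longlonglongrightarrow> blinfun_apply g x"
  proof (rule tendsto_of_subseq_bounds)
    show "a \<le> blinfun_apply g x"
      if "strict_mono q" "\<And>n. a \<le> blinfun_apply g (w (q n))" for q :: "nat \<Rightarrow> nat" and a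
      using weak_limsup_point_lower_bound[OF limsup_point[OF that(1)]] that(2) .
    show "blinfun_apply g x \<le> a"
      if "strict_mono q" "\<And>n. blinfun_apply g (w (q n)) \<le> a" for q :: "nat \<Rightarrow> nat" and a
      using weak_limsup_point_lower_bound[OF limsup_point[OF that(1)], of "- a" "- g"] that(2)
      by (simp add: blinfun.minus_left)
  qed
qed

lemma kadets_klee_tendsto:
  fixes w :: "nat \<Rightarrow> 'a::real_normed_vector"
  assumes "kadets_klee TYPE('a)" "weakly_converges w x" "(\<lambda>n. norm (w n)) \<longlonglongrightarrow> norm x"
  shows "w \<longlonglongrightarrow> x"
proof -
  have "(\<lambda>n. norm (w n - x)) \<longlonglongrightarrow> 0"
    using assms unfolding kadets_klee_def by blast
  then show ?thesis by (simp add: LIM_zero_iff tendsto_norm_zero_iff)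
qed

lemma norm_tendsto_1_if_norming:
  fixes T :: "'a::real_normed_vector \<Rightarrow>\<^sub>L 'b::real_normed_vector"
  assumes "T \<noteq> 0" "\<forall>n. norm (z n) \<le> 1" "(\<lambda>n. norm (blinfun_apply T (z n))) \<longlonglongrightarrow> norm T"
  shows "(\<lambda>n. norm (z n)) \<longlonglongrightarrow> 1"
proof (rule tendsto_sandwich[OF _ _ _ tendsto_const])
  show "(\<lambda>n. norm (blinfun_apply T (z n)) / norm T) \<longlonglongrightarrow> 1"
    using tendsto_divide[OF assms(3) tendsto_const, of "norm T"] assms(1) by simp
  have "norm (blinfun_apply T (z n)) \<le> norm T * norm (z n)" for n by (rule norm_blinfun)
  then show "\<forall>\<^sub>F n in sequentially. norm (blinfun_apply T (z n)) / norm T \<le> norm (z n)"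
    using assms(1) by (intro always_eventually allI) (simp add: divide_le_eq mult.commute)
  show "\<forall>\<^sub>F n in sequentially. norm (z n) \<le> 1" using assms(2) by (intro always_eventually) blast
qed

lemma norming_point_eq_if_same_image:
  fixes T :: "'a::real_normed_vector \<Rightarrow>\<^sub>L 'b::real_normed_vector"
  assumes "T \<noteq> 0"
    and norming_points: "\<And>x. norm x \<le> 1 \<Longrightarrow> norm (blinfun_apply T x) = norm T \<Longrightarrow> x = x0 \<or> x = - x0"
    and x: "norm x \<le> 1" "norm (blinfun_apply T x) = norm T"
    and x': "norm x' \<le> 1" "blinfun_apply T x' = blinfun_apply T x"
  shows "x' = x"
proof (rule ccontr)
  assume "x' \<noteq> x"
  then have "x' = - x" using norming_points[OF x] norming_points[OF x'(1)] x' x(2) by auto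
  then have "blinfun_apply T x = - blinfun_apply T x" using x'(2) by (simp add: blinfun.minus_right)
  then have "(2::real) *\<^sub>R blinfun_apply T x = 0" by (metis add.right_inverse scaleR_2)
  then show False using x(2) \<open>T \<noteq> 0\<close> by simp
qed

definition norming_sequences_subconverge ::
    "('a::real_normed_vector \<Rightarrow>\<^sub>L 'b::real_normed_vector) \<Rightarrow> 'a \<Rightarrow> bool" where
  "norming_sequences_subconverge T x0 \<longleftrightarrow>
     (\<forall>z :: nat \<Rightarrow> 'a. (\<forall>n. norm (z n) \<le> 1) \<longrightarrow> (\<lambda>n. norm (blinfun_apply T (z n))) \<longlonglongrightarrow> norm T \<longrightarrow>
        (\<exists>r. strict_mono r \<and> ((\<lambda>n. z (r n)) \<longlonglongrightarrow> x0 \<or> (\<lambda>n. z (r n)) \<longlonglongrightarrow> - x0)))"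

lemma compact_operator_norming_sequences_subconverge:
  fixes T :: "'a::real_normed_vector \<Rightarrow>\<^sub>L 'b::real_normed_vector"
  assumes reflexive: "reflexive_space TYPE('a)" and kk: "kadets_klee TYPE('a)"
    and T: "T \<in> compact_operators" "T \<noteq> 0"
    and norming_points: "\<And>x. norm x \<le> 1 \<Longrightarrow> norm (blinfun_apply T x) = norm T \<Longrightarrow> x = x0 \<or> x = - x0"
  shows "norming_sequences_subconverge T x0"
  unfolding norming_sequences_subconverge_def
proof (intro allI impI)
  fix z :: "nat \<Rightarrow> 'a"
  assume z: "\<forall>n. norm (z n) \<le> 1" "(\<lambda>n. norm (blinfun_apply T (z n))) \<longlonglongrightarrow> norm T"
  obtain r y where r: "strict_mono r" "(\<lambda>n. blinfun_apply T (z (r n))) \<longlonglongrightarrow> y"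
    using compact_operator_convergent_subseq[OF T(1) z(1)] by blast
  define w where "w n = z (r n)" for n
  have w: "\<forall>n. norm (w n) \<le> 1" using z(1) by (simp add: w_def)
  have Tw: "(\<lambda>n. blinfun_apply T (w n)) \<longlonglongrightarrow> y" using r(2) by (simp add: w_def)
  have w_norming: "(\<lambda>n. norm (blinfun_apply T (w n))) \<longlonglongrightarrow> norm T"
    using LIMSEQ_subseq_LIMSEQ[OF z(2) r(1)] by (simp add: w_def o_def)
  have "norm y = norm T" by (rule LIMSEQ_unique[OF tendsto_norm[OF Tw] w_norming])
  obtain x where x: "norm x \<le> 1" "weak_limsup_point w x"
    using reflexive_exists_weak_limsup_point[OF reflexive w] by blast
  have Tx: "blinfun_apply T x = y" by (rule weak_limsup_point_image[OF x(2) Tw])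
  have x_norming: "norm (blinfun_apply T x) = norm T" using Tx \<open>norm y = norm T\<close> by simp
  have unique: "x' = x"
    if "strict_mono q" "norm x' \<le> 1" "weak_limsup_point (\<lambda>n. w (q n)) x'" for q x'
  proof (rule norming_point_eq_if_same_image[OF T(2) norming_points x(1) x_norming that(2)])
    have "(\<lambda>n. blinfun_apply T (w (q n))) \<longlonglongrightarrow> y"
      using LIMSEQ_subseq_LIMSEQ[OF Tw that(1)] by (simp add: o_def)
    then show "blinfun_apply T x' = blinfun_apply T x"
      using weak_limsup_point_image[OF that(3)] Tx by blast
  qed
  have "weakly_converges w x"
    by (rule weakly_converges_if_unique_weak_limsup_point[OF reflexive w unique])
  moreover have "(\<lambda>n. norm (w n)) \<longlonglongrightarrow> norm x"
    using norm_tendsto_1_if_norming[OF T(2) w w_norming] norm_eq_1_if_norming[OF T(2) x(1) x_norming]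
    by simp
  ultimately have "w \<longlonglongrightarrow> x" by (rule kadets_klee_tendsto[OF kk])
  then have "(\<lambda>n. z (r n)) \<longlonglongrightarrow> x" by (simp add: w_def[abs_def])
  then show "\<exists>r. strict_mono r \<and> ((\<lambda>n. z (r n)) \<longlonglongrightarrow> x0 \<or> (\<lambda>n. z (r n)) \<longlonglongrightarrow> - x0)"
    using r(1) norming_points[OF x(1) x_norming] by blast
qed

lemma supporting_functional_perturbation:
  fixes T D :: "'a::real_normed_vector \<Rightarrow>\<^sub>L 'b::real_normed_vector"
  assumes F: "unit_functional_on UNIV F" "F T = norm T" and "t > 0"
    and almost_norming: "norm (T + t *\<^sub>R D) - t * t < norm (blinfun_apply (T + t *\<^sub>R D) z)"
  shows "norm T + t * F D < norm (blinfun_apply T z) + t * norm (blinfun_apply D z) + t * t"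
proof -
  have "norm T + t * F D = F (T + t *\<^sub>R D)"
    using F unit_functional_on_linear_on[OF F(1)] unfolding linear_on_def by simp
  also have "\<dots> \<le> norm (T + t *\<^sub>R D)"
    using unit_functional_on_abs_le[OF F(1)] abs_ge_self order_trans by blast
  also have "\<dots> < norm (blinfun_apply (T + t *\<^sub>R D) z) + t * t" using almost_norming by simp
  also have "norm (blinfun_apply (T + t *\<^sub>R D) z) \<le> norm (blinfun_apply T z) + t * norm (blinfun_apply D z)"
    using norm_triangle_ineq[of "blinfun_apply T z" "t *\<^sub>R blinfun_apply D z"] \<open>t > 0\<close>
    by (simp add: blinfun.add_left blinfun.scaleR_left)
  finally show ?thesis by simp
qed

text \<open>Vectors almost norming \<open>T + t D\<close> with \<open>t \<rightarrow> 0\<close> norm \<open>T\<close> in the limit, and since F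
  supports T they see D at least with weight F D.\<close>
lemma supporting_functional_perturbed_norming_sequence:
  fixes T D :: "'a::real_normed_vector \<Rightarrow>\<^sub>L 'b::real_normed_vector"
  assumes F: "unit_functional_on UNIV F" "F T = norm T" and "F D \<ge> 0"
  obtains z where "\<forall>n. norm (z n) \<le> 1" "(\<lambda>n. norm (blinfun_apply T (z n))) \<longlonglongrightarrow> norm T"
    "\<And>n. F D < norm (blinfun_apply D (z n)) + inverse (real (Suc n))"
proof -
  define t where "t n = inverse (real (Suc n))" for n
  have t: "0 < t n" "t n \<le> 1" for n unfolding t_def by (simp_all add: inverse_le_1_iff)
  have "\<exists>x. norm x \<le> 1 \<and> norm (T + t n *\<^sub>R D) - t n * t n < norm (blinfun_apply (T + t n *\<^sub>R D) x)"
    for n using t(1)[of n] by (intro exists_almost_norming_vector) simp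
  then obtain z where z: "\<And>n. norm (z n) \<le> 1"
    "\<And>n. norm (T + t n *\<^sub>R D) - t n * t n < norm (blinfun_apply (T + t n *\<^sub>R D) (z n))"
    by metis
  note key = supporting_functional_perturbation[OF F t(1) z(2)]
  have T_z: "norm (blinfun_apply T (z n)) \<le> norm T" and D_z: "norm (blinfun_apply D (z n)) \<le> norm D" for n
    using norm_blinfun_apply_le_norm[OF z(1)] by blast+
  have D_lower: "F D < norm (blinfun_apply D (z n)) + t n" for n
  proof -
    have "t n * F D < t n * (norm (blinfun_apply D (z n)) + t n)"
      using key[of n] T_z[of n] by (simp add: algebra_simps)
    then show ?thesis using t(1)[of n] by simp
  qed
  have T_lower: "norm T - t n * (norm D + 1) \<le> norm (blinfun_apply T (z n))" for n
  proof -
    have "t n * norm (blinfun_apply D (z n)) \<le> t n * norm D" "t n * t n \<le> t n" "0 \<le> t n * F D"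
      using D_z[of n] t[of n] \<open>F D \<ge> 0\<close> by (simp_all add: mult_left_mono mult_left_le)
    then show ?thesis using key[of n] by (simp add: algebra_simps)
  qed
  have "(\<lambda>n. norm T - t n * (norm D + 1)) \<longlonglongrightarrow> norm T - 0 * (norm D + 1)"
    unfolding t_def by (intro tendsto_intros LIMSEQ_inverse_real_of_nat)
  then have lo: "(\<lambda>n. norm T - t n * (norm D + 1)) \<longlonglongrightarrow> norm T" by simp
  have "(\<lambda>n. norm (blinfun_apply T (z n))) \<longlonglongrightarrow> norm T"
    by (rule tendsto_sandwich[OF _ _ lo tendsto_const]) (simp_all add: T_lower T_z)
  with z(1) D_lower show ?thesis using that unfolding t_def by blast
qed

lemma supporting_functional_vanishes:
  fixes T D :: "'a::real_normed_vector \<Rightarrow>\<^sub>L 'b::real_normed_vector"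
  assumes converge: "norming_sequences_subconverge T x0"
    and F: "unit_functional_on UNIV F" "F T = norm T" and D: "blinfun_apply D x0 = 0"
  shows "F D = 0"
proof -
  have nonpos: "F E \<le> 0" if E: "blinfun_apply E x0 = 0" for E
  proof (rule ccontr)
    assume "\<not> F E \<le> 0"
    then have "F E \<ge> 0" by simp
    then obtain z where z: "\<forall>n. norm (z n) \<le> 1" "(\<lambda>n. norm (blinfun_apply T (z n))) \<longlonglongrightarrow> norm T"
      "\<And>n. F E < norm (blinfun_apply E (z n)) + inverse (real (Suc n))"
      using supporting_functional_perturbed_norming_sequence[OF F] by blast
    obtain r where r: "strict_mono r" "(\<lambda>n. z (r n)) \<longlonglongrightarrow> x0 \<or> (\<lambda>n. z (r n)) \<longlonglongrightarrow> - x0"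
      using converge z(1,2) unfolding norming_sequences_subconverge_def by blast
    have "(\<lambda>n. blinfun_apply E (z (r n))) \<longlonglongrightarrow> blinfun_apply E x0 \<or>
        (\<lambda>n. blinfun_apply E (z (r n))) \<longlonglongrightarrow> blinfun_apply E (- x0)"
      using r(2) blinfun.tendsto[OF tendsto_const] by blast
    then have E_lim: "(\<lambda>n. blinfun_apply E (z (r n))) \<longlonglongrightarrow> 0"
      using E by (auto simp: blinfun.minus_right)
    have inverse_lim: "(\<lambda>n. inverse (real (Suc (r n)))) \<longlonglongrightarrow> 0"
      using LIMSEQ_subseq_LIMSEQ[OF LIMSEQ_inverse_real_of_nat r(1)] by (simp add: o_def)
    have "(\<lambda>n. norm (blinfun_apply E (z (r n))) + inverse (real (Suc (r n)))) \<longlonglongrightarrow> 0"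
      using tendsto_add[OF tendsto_norm_zero[OF E_lim] inverse_lim] by simp
    then have "F E \<le> 0"
      by (rule LIMSEQ_le_const) (use z(3) less_imp_le in blast)
    with \<open>\<not> F E \<le> 0\<close> show False by simp
  qed
  have "F (- D) = - F D" by (rule linear_on_minus[OF unit_functional_on_linear_on[OF F(1)]])
  then show ?thesis using nonpos[OF D] nonpos[of "- D"] D by (simp add: blinfun.minus_left)
qed

lemma supporting_functional_rank_one_part:
  fixes T A :: "'a::real_normed_vector \<Rightarrow>\<^sub>L 'b::real_normed_vector" and g0 :: "'a \<Rightarrow>\<^sub>L real"
  assumes converge: "norming_sequences_subconverge T x0"
    and F: "unit_functional_on UNIV F" "F T = norm T" and g0: "blinfun_apply g0 x0 = 1"
  shows "F A = F (blinfun_scaleR_left (blinfun_apply A x0) o\<^sub>L g0)"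
proof -
  define C where "C = blinfun_scaleR_left (blinfun_apply A x0) o\<^sub>L g0"
  have "blinfun_apply (A - C) x0 = 0" using g0 by (simp add: C_def blinfun.diff_left)
  then have "F (A - C) = 0" by (rule supporting_functional_vanishes[OF converge F])
  moreover have "F (C + (A - C)) = F C + F (A - C)"
    using unit_functional_on_linear_on[OF F(1)] unfolding linear_on_def by blast
  ultimately show ?thesis by (simp add: C_def)
qed

lemma smooth_point_in_compact_operators_imp_UNIV:
  fixes T :: "'a::real_normed_vector \<Rightarrow>\<^sub>L 'b::real_normed_vector"
  assumes reflexive: "reflexive_space TYPE('a)" and kk: "kadets_klee TYPE('a)"
    and smooth: "smooth_point_in compact_operators T"
  shows "smooth_point_in UNIV T"
proof -
  have T: "T \<in> compact_operators" "T \<noteq> 0" using smooth unfolding smooth_point_in_def by auto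
  obtain f where f: "unit_functional_on compact_operators f" "f T = norm T"
    and f_unique: "\<And>g. unit_functional_on compact_operators g \<Longrightarrow> g T = norm T \<Longrightarrow> g = f"
    using smooth unfolding smooth_point_in_def by blast
  obtain x0 where x0: "norm x0 \<le> 1" "norm (blinfun_apply T x0) = norm T"
    using compact_operator_attains_norm[OF reflexive T(1)] by blast
  have "norm x0 = 1" by (rule norm_eq_1_if_norming[OF T(2) x0])
  then obtain g0 :: "'a \<Rightarrow>\<^sub>L real" where g0: "blinfun_apply g0 x0 = 1"
    using exists_norming_functional[of x0] by force
  have converge: "norming_sequences_subconverge T x0"
    using compact_operator_norming_sequences_subconverge[OF reflexive kk T
        smooth_compact_operator_norming_points[OF smooth x0]] .
  have restriction: "F B = f B"
    if F: "unit_functional_on UNIV F" "F T = norm T" and B: "B \<in> compact_operators" for F B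
  proof -
    have "(\<lambda>B. if B \<in> compact_operators then F B else 0) = f"
      using unit_functional_on_restrict[OF F compact_operators_subspace T] F(2) T(1)
      by (intro f_unique) auto
    then show ?thesis using B by (metis (mono_tags, lifting))
  qed
  have "F = G"
    if F: "unit_functional_on UNIV F" "F T = norm T" and G: "unit_functional_on UNIV G" "G T = norm T"
    for F G :: "('a \<Rightarrow>\<^sub>L 'b) \<Rightarrow> real"
  proof
    fix A :: "'a \<Rightarrow>\<^sub>L 'b"
    let ?C = "blinfun_scaleR_left (blinfun_apply A x0) o\<^sub>L g0"
    have "F A = f ?C"
      using supporting_functional_rank_one_part[OF converge F g0]
        restriction[OF F rank_one_compact_operator] by simp
    also have "\<dots> = G A"
      using supporting_functional_rank_one_part[OF converge G g0]
        restriction[OF G rank_one_compact_operator] by simp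
    finally show "F A = G A" .
  qed
  moreover obtain G where "unit_functional_on UNIV G" "G T = norm T"
    using unit_functional_on_extend[OF f compact_operators_subspace T] by blast
  ultimately show ?thesis using T(2) unfolding smooth_point_in_def by blast
qed

theorem theorem3p5:
  fixes T :: "'a::banach \<Rightarrow>\<^sub>L 'b::real_normed_vector"
  assumes "reflexive_space TYPE('a)"
    and "kadets_klee TYPE('a)"
    and "T \<in> compact_operators"
  shows "smooth_point_in (UNIV :: ('a \<Rightarrow>\<^sub>L 'b) set) T
         \<longleftrightarrow> smooth_point_in (compact_operators :: ('a \<Rightarrow>\<^sub>L 'b) set) T"
proof
  assume "smooth_point_in (UNIV :: ('a \<Rightarrow>\<^sub>L 'b) set) T"
  then show "smooth_point_in (compact_operators :: ('a \<Rightarrow>\<^sub>L 'b) set) T"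
    by (rule smooth_point_in_UNIV_imp_subspace[OF compact_operators_subspace assms(3)])
next
  assume "smooth_point_in (compact_operators :: ('a \<Rightarrow>\<^sub>L 'b) set) T"
  then show "smooth_point_in (UNIV :: ('a \<Rightarrow>\<^sub>L 'b) set) T"
    by (rule smooth_point_in_compact_operators_imp_UNIV[OF assms(1,2)])
qed

end
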